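(* Let $(\Lambda,d)$ be a $k$-graph. Let $\lambda\in\Lambda$ and $(x;(m,n))\in P_\Lambda$ with $m\le d(x)$ and $s(\lambda)=x(m)$, and let $z=\lambda\,\sigma^m x$. Then (i) $z\in\Lambda^{\le\infty}$, and (ii) $(z;(d(\lambda),n-m+d(\lambda)))\sim(x;(m,n))$.
   Context: A $k$-graph $(\Lambda,d)$ is a countable category with a degree functor $d:\Lambda\to\mathbb{N}^k$ satisfying unique factorization (if $d(\lambda)=m+n$ there are unique $\mu,\nu$ with $\lambda=\mu\nu$, $d(\mu)=m$, $d(\nu)=n$); $\Lambda^0$ vertices, $r,s$ range/source, $v\Lambda^n=\{\lambda:r(\lambda)=v,d(\lambda)=n\}$; $e_i$ standard basis, $\le$ coordinatewise, $\vee,\wedge$ coordinatewise max/min. For $m\in(\mathbb{N}\cup\{\infty\})^k$, $\Omega_{k,m}$ is the $k$-graph with objects $\{p\in\mathbb{N}^k:p\le m\}$, morphisms $(p,q)$, $p\le q\le m$, $r(p,q)=p$, $s(p,q)=q$, $d(p,q)=q-p$. A graph morphism $x:\Omega_{k,m}\to\Lambda$ is a degree-preserving functor; $d(x)=m$, $x(a,b)=x((a,b))$, $x(a)=x(a,a)$. It is a boundary path if there is $n_x\in\mathbb{N}^k$, $n_x\le d(x)$, with $x(p)\Lambda^{e_i}=\emptyset$ whenever $p\in\mathbb{N}^k$, $n_x\le p\le d(x)$, $p_i=d(x)_i$; $\Lambda^{\le\infty}$ is the set of boundary paths. $\sigma^px(a,b)=x(a+p,b+p)$ on $\Omega_{k,d(x)-p}$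 for $p\le d(x)$. For $\lambda$ with $s(\lambda)=x(0)$, $\lambda x:\Omega_{k,d(\lambda)+d(x)}\to\Lambda$ is the graph morphism with $(\lambda x)(0,d(\lambda))=\lambda$, $(\lambda x)(0,p)=\lambda\,x(0,p-d(\lambda))$ for $d(\lambda)\le p\le d(\lambda)+d(x)$. $P_\Lambda=\{(x;(m,n)):x\in\Lambda^{\le\infty},m,n\in\mathbb{N}^k,m\le n,n\not\le d(x)\}$, and $(x;(m,n))\sim(y;(p,q))$ iff $x(m\wedge d(x),n\wedge d(x))=y(p\wedge d(y),q\wedge d(y))$, $m-m\wedge d(x)=p-p\wedge d(y)$ and $n-m=q-p$. *)

theory Defs
  imports Main "HOL-Library.Extended_Nat" "HOL-Library.Countable_Set" "HOL-Library.Function_Algebras"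
begin

text \<open>Elements of N^k are represented as functions nat => nat vanishing at indices >= k;
elements of (N u {inf})^k as functions nat => enat vanishing at indices >= k.
A k-graph is a countable category whose morphisms form the set L, whose objects are
identified with the identity morphisms, with range/source maps r, s (returning identity
morphisms), partial composition cmp (cmp f g defined when s f = r g) and degree d.\<close>

definition NN :: "nat \<Rightarrow> (nat \<Rightarrow> nat) set" where
  "NN k = {m. \<forall>i\<ge>k. m i = 0}"

definition NNinf :: "nat \<Rightarrow> (nat \<Rightarrow> enat) set" where
  "NNinf k = {m. \<forall>i\<ge>k. m i = 0}"

definition le_en :: "(nat \<Rightarrow> nat) \<Rightarrow> (nat \<Rightarrow> enat) \<Rightarrow> bool" where
  "le_en p m \<longleftrightarrow> (\<forall>i. enat (p i) \<le> m i)"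

definition unitv :: "nat \<Rightarrow> nat \<Rightarrow> nat" where
  "unitv i = (\<lambda>j. if j = i then 1 else 0)"

definition meet_en :: "(nat \<Rightarrow> nat) \<Rightarrow> (nat \<Rightarrow> enat) \<Rightarrow> nat \<Rightarrow> nat" where
  "meet_en p m = (\<lambda>i. case m i of enat b \<Rightarrow> min (p i) b | \<infinity> \<Rightarrow> p i)"

definition kgraph ::
  "nat \<Rightarrow> 'a set \<Rightarrow> ('a \<Rightarrow> 'a) \<Rightarrow> ('a \<Rightarrow> 'a) \<Rightarrow> ('a \<Rightarrow> 'a \<Rightarrow> 'a) \<Rightarrow> ('a \<Rightarrow> nat \<Rightarrow> nat) \<Rightarrow> bool"
  where
  "kgraph k L r s cmp d \<longleftrightarrow>
     countable L \<and>
     (\<forall>f\<in>L. r f \<in> L \<and> s f \<in> L \<and> r (r f) = r f \<and> s (r f) = r f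
              \<and> r (s f) = s f \<and> s (s f) = s f) \<and>
     (\<forall>f\<in>L. cmp (r f) f = f \<and> cmp f (s f) = f) \<and>
     (\<forall>f\<in>L. \<forall>g\<in>L. s f = r g \<longrightarrow>
         cmp f g \<in> L \<and> r (cmp f g) = r f \<and> s (cmp f g) = s g) \<and>
     (\<forall>f\<in>L. \<forall>g\<in>L. \<forall>h\<in>L. s f = r g \<longrightarrow> s g = r h \<longrightarrow>
         cmp (cmp f g) h = cmp f (cmp g h)) \<and>
     (\<forall>f\<in>L. d f \<in> NN k) \<and>
     (\<forall>f\<in>L. \<forall>g\<in>L. s f = r g \<longrightarrow> d (cmp f g) = d f + d g) \<and>
     (\<forall>f\<in>L. \<forall>m\<in>NN k. \<forall>n\<in>NN k. d f = m + n \<longrightarrow>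
         (\<exists>!(g, h). g \<in> L \<and> h \<in> L \<and> s g = r h \<and> f = cmp g h \<and> d g = m \<and> d h = n))"

text \<open>A degree-preserving functor x : Omega_{k,m} \<rightarrow> Lambda; x p q stands for x((p,q)),
 only its values for p \<le> q \<le> m are relevant.\<close>
definition graph_morph ::
  "nat \<Rightarrow> 'a set \<Rightarrow> ('a \<Rightarrow> 'a) \<Rightarrow> ('a \<Rightarrow> 'a) \<Rightarrow> ('a \<Rightarrow> 'a \<Rightarrow> 'a) \<Rightarrow> ('a \<Rightarrow> nat \<Rightarrow> nat)
    \<Rightarrow> (nat \<Rightarrow> enat) \<Rightarrow> ((nat \<Rightarrow> nat) \<Rightarrow> (nat \<Rightarrow> nat) \<Rightarrow> 'a) \<Rightarrow> bool"
  where
  "graph_morph k L r s cmp d m x \<longleftrightarrow>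
     m \<in> NNinf k \<and>
     (\<forall>p\<in>NN k. \<forall>q\<in>NN k. p \<le> q \<and> le_en q m \<longrightarrow>
        x p q \<in> L \<and> d (x p q) = q - p \<and> r (x p q) = x p p \<and> s (x p q) = x q q) \<and>
     (\<forall>p\<in>NN k. \<forall>q\<in>NN k. \<forall>t\<in>NN k. p \<le> q \<and> q \<le> t \<and> le_en t m \<longrightarrow>
        cmp (x p q) (x q t) = x p t)"

definition boundary_path ::
  "nat \<Rightarrow> 'a set \<Rightarrow> ('a \<Rightarrow> 'a) \<Rightarrow> ('a \<Rightarrow> 'a) \<Rightarrow> ('a \<Rightarrow> 'a \<Rightarrow> 'a) \<Rightarrow> ('a \<Rightarrow> nat \<Rightarrow> nat)
    \<Rightarrow> (nat \<Rightarrow> enat) \<Rightarrow> ((nat \<Rightarrow> nat) \<Rightarrow> (nat \<Rightarrow> nat) \<Rightarrow> 'a) \<Rightarrow> bool"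
  where
  "boundary_path k L r s cmp d m x \<longleftrightarrow>
     graph_morph k L r s cmp d m x \<and>
     (\<exists>nx\<in>NN k. le_en nx m \<and>
        (\<forall>p\<in>NN k. nx \<le> p \<and> le_en p m \<longrightarrow>
           (\<forall>i<k. enat (p i) = m i \<longrightarrow>
              \<not> (\<exists>e\<in>L. r e = x p p \<and> d e = unitv i))))"

definition shift :: "(nat \<Rightarrow> nat) \<Rightarrow> ((nat \<Rightarrow> nat) \<Rightarrow> (nat \<Rightarrow> nat) \<Rightarrow> 'a)
    \<Rightarrow> ((nat \<Rightarrow> nat) \<Rightarrow> (nat \<Rightarrow> nat) \<Rightarrow> 'a)" where
  "shift p x = (\<lambda>a b. x (a + p) (b + p))"

definition deg_shift :: "(nat \<Rightarrow> nat) \<Rightarrow> (nat \<Rightarrow> enat) \<Rightarrow> nat \<Rightarrow> enat" where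
  "deg_shift p m = (\<lambda>i. m i - enat (p i))"

definition deg_concat :: "(nat \<Rightarrow> nat) \<Rightarrow> (nat \<Rightarrow> enat) \<Rightarrow> nat \<Rightarrow> enat" where
  "deg_concat a m = (\<lambda>i. enat (a i) + m i)"

text \<open>z is the graph morphism lambda y : Omega_{k, d(lambda)+d(y)} \<rightarrow> Lambda.\<close>
definition is_concat ::
  "nat \<Rightarrow> 'a set \<Rightarrow> ('a \<Rightarrow> 'a) \<Rightarrow> ('a \<Rightarrow> 'a) \<Rightarrow> ('a \<Rightarrow> 'a \<Rightarrow> 'a) \<Rightarrow> ('a \<Rightarrow> nat \<Rightarrow> nat)
    \<Rightarrow> 'a \<Rightarrow> (nat \<Rightarrow> enat) \<Rightarrow> ((nat \<Rightarrow> nat) \<Rightarrow> (nat \<Rightarrow> nat) \<Rightarrow> 'a)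
    \<Rightarrow> ((nat \<Rightarrow> nat) \<Rightarrow> (nat \<Rightarrow> nat) \<Rightarrow> 'a) \<Rightarrow> bool"
  where
  "is_concat k L r s cmp d lam my y z \<longleftrightarrow>
     graph_morph k L r s cmp d (deg_concat (d lam) my) z \<and>
     z 0 (d lam) = lam \<and>
     (\<forall>p\<in>NN k. d lam \<le> p \<and> le_en p (deg_concat (d lam) my) \<longrightarrow>
        z 0 p = cmp lam (y 0 (p - d lam)))"

definition in_P ::
  "nat \<Rightarrow> 'a set \<Rightarrow> ('a \<Rightarrow> 'a) \<Rightarrow> ('a \<Rightarrow> 'a) \<Rightarrow> ('a \<Rightarrow> 'a \<Rightarrow> 'a) \<Rightarrow> ('a \<Rightarrow> nat \<Rightarrow> nat)
    \<Rightarrow> (nat \<Rightarrow> enat) \<Rightarrow> ((nat \<Rightarrow> nat) \<Rightarrow> (nat \<Rightarrow> nat) \<Rightarrow> 'a) \<Rightarrow> (nat \<Rightarrow> nat) \<Rightarrow> (nat \<Rightarrow> nat) \<Rightarrow> bool"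
  where
  "in_P k L r s cmp d dx x m n \<longleftrightarrow>
     boundary_path k L r s cmp d dx x \<and> m \<in> NN k \<and> n \<in> NN k \<and> m \<le> n \<and> \<not> le_en n dx"

definition P_equiv ::
  "nat \<Rightarrow> 'a set \<Rightarrow> ('a \<Rightarrow> 'a) \<Rightarrow> ('a \<Rightarrow> 'a) \<Rightarrow> ('a \<Rightarrow> 'a \<Rightarrow> 'a) \<Rightarrow> ('a \<Rightarrow> nat \<Rightarrow> nat)
    \<Rightarrow> (nat \<Rightarrow> enat) \<Rightarrow> ((nat \<Rightarrow> nat) \<Rightarrow> (nat \<Rightarrow> nat) \<Rightarrow> 'a) \<Rightarrow> (nat \<Rightarrow> nat) \<Rightarrow> (nat \<Rightarrow> nat)
    \<Rightarrow> (nat \<Rightarrow> enat) \<Rightarrow> ((nat \<Rightarrow> nat) \<Rightarrow> (nat \<Rightarrow> nat) \<Rightarrow> 'a) \<Rightarrow> (nat \<Rightarrow> nat) \<Rightarrow> (nat \<Rightarrow> nat) \<Rightarrow> bool"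
  where
  "P_equiv k L r s cmp d dx x m n dy y p q \<longleftrightarrow>
     in_P k L r s cmp d dx x m n \<and> in_P k L r s cmp d dy y p q \<and>
     x (meet_en m dx) (meet_en n dx) = y (meet_en p dy) (meet_en q dy) \<and>
     m - meet_en m dx = p - meet_en p dy \<and>
     n - m = q - p"

end

theory Submission
  imports Defs
begin

text \<open>Unique factorisation makes composition with a fixed morphism left-cancellative, hence
shifting \<lambda>y by d(\<lambda>) gives back y: beyond d(\<lambda>) the path z = \<lambda>\<sigma>^m x is x translated by
d(\<lambda>) - m. So the witness n_x of the boundary condition of x transfers to d(\<lambda>) + (n_x - m),
and the segment of z from d(\<lambda>) to the meet of n - m + d(\<lambda>) with d(z) is the segment of x
from m to the meet of n with d(x).\<close>

lemma add_in_NN: "a \<in> NN k \<Longrightarrow> b \<in> NN k \<Longrightarrow> a + b \<in> NN k"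
  by (simp add: NN_def)

lemma diff_in_NN: "a \<in> NN k \<Longrightarrow> a - b \<in> NN k"
  by (simp add: NN_def)

lemma zero_in_NN: "0 \<in> NN k"
  by (simp add: NN_def)

lemma meet_en_in_NN: "p \<in> NN k \<Longrightarrow> meet_en p m \<in> NN k"
  by (auto simp: NN_def meet_en_def split: enat.split)

lemma deg_shift_in_NNinf: "m \<in> NNinf k \<Longrightarrow> deg_shift p m \<in> NNinf k"
  by (simp add: NNinf_def deg_shift_def)

lemma le_en_mono: "p \<le> q \<Longrightarrow> le_en q m \<Longrightarrow> le_en p m"
  unfolding le_en_def le_fun_def by (meson enat_ord_simps(1) order_trans)

lemma le_en_zero: "le_en 0 m"
  by (simp add: le_en_def zero_enat_def[symmetric])

lemma le_en_deg_concat_iff: "le_en (p + a) (deg_concat a m) \<longleftrightarrow> le_en p m"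
proof -
  have "enat (p i + a i) \<le> enat (a i) + m i \<longleftrightarrow> enat (p i) \<le> m i" for i
    by (cases "m i") auto
  then show ?thesis
    by (simp add: le_en_def deg_concat_def)
qed

lemma le_en_deg_shift_iff:
  assumes "le_en m dx"
  shows "le_en p (deg_shift m dx) \<longleftrightarrow> le_en (p + m) dx"
proof -
  have "enat (p i) \<le> dx i - enat (m i) \<longleftrightarrow> enat (p i + m i) \<le> dx i" for i
    using assms unfolding le_en_def by (cases "dx i") (auto dest: spec[of _ i])
  then show ?thesis
    by (simp add: le_en_def deg_shift_def)
qed

lemma enat_eq_deg_concat_iff: "enat (p i + a i) = deg_concat a m i \<longleftrightarrow> enat (p i) = m i"
  by (cases "m i") (auto simp: deg_concat_def)

lemma enat_eq_deg_shift_iff: "le_en m dx \<Longrightarrow> enat (p i) = deg_shift m dx i \<longleftrightarrow> enat (p i + m i) = dx i"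
  unfolding le_en_def deg_shift_def by (cases "dx i") (auto dest: spec[of _ i])

lemma meet_en_eq_self: "meet_en p m = p" if "le_en p m"
proof
  fix i
  show "meet_en p m i = p i"
    using that unfolding le_en_def meet_en_def by (cases "m i") (auto dest: spec[of _ i])
qed

lemma le_en_meet_en: "le_en (meet_en p m) m"
  unfolding le_en_def meet_en_def by (auto split: enat.split)

lemma meet_en_greatest:
  assumes "m \<le> p" "le_en m dx"
  shows "m \<le> meet_en p dx"
proof (rule le_funI)
  fix i
  show "m i \<le> meet_en p dx i"
    using le_funD[OF assms(1), of i] assms(2) unfolding le_en_def meet_en_def
    by (cases "dx i") (auto dest: spec[of _ i])
qed

lemma meet_en_deg_concat: "meet_en (p + a) (deg_concat a m) = meet_en p m + a"
  unfolding meet_en_def deg_concat_def by (rule ext) (auto split: enat.split)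

lemma meet_en_deg_shift:
  "m \<le> p \<Longrightarrow> le_en m dx \<Longrightarrow> meet_en (p - m) (deg_shift m dx) = meet_en p dx - m"
  unfolding meet_en_def deg_shift_def le_en_def le_fun_def by (rule ext) (auto split: enat.split)

lemma kgraph_degree_in_NN: "kgraph k L r s cmp d \<Longrightarrow> f \<in> L \<Longrightarrow> d f \<in> NN k"
  unfolding kgraph_def by (elim conjE) blast

lemma kgraph_cmp:
  assumes kg: "kgraph k L r s cmp d" and "f \<in> L" "g \<in> L" "s f = r g"
  shows "cmp f g \<in> L" "r (cmp f g) = r f" "s (cmp f g) = s g" "d (cmp f g) = d f + d g"
proof -
  have "\<forall>f\<in>L. \<forall>g\<in>L. s f = r g \<longrightarrow> cmp f g \<in> L \<and> r (cmp f g) = r f \<and> s (cmp f g) = s g"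
    using kg unfolding kgraph_def by (elim conjE)
  moreover have "\<forall>f\<in>L. \<forall>g\<in>L. s f = r g \<longrightarrow> d (cmp f g) = d f + d g"
    using kg unfolding kgraph_def by (elim conjE)
  ultimately show "cmp f g \<in> L" "r (cmp f g) = r f" "s (cmp f g) = s g" "d (cmp f g) = d f + d g"
    using assms by blast+
qed

lemma kgraph_cmp_assoc:
  assumes kg: "kgraph k L r s cmp d" and "f \<in> L" "g \<in> L" "h \<in> L" "s f = r g" "s g = r h"
  shows "cmp (cmp f g) h = cmp f (cmp g h)"
proof -
  have "\<forall>f\<in>L. \<forall>g\<in>L. \<forall>h\<in>L. s f = r g \<longrightarrow> s g = r h \<longrightarrow> cmp (cmp f g) h = cmp f (cmp g h)"
    using kg unfolding kgraph_def by (elim conjE)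
  then show ?thesis
    using assms by blast
qed

lemma kgraph_cancel_left:
  assumes kg: "kgraph k L r s cmp d" and "f \<in> L" "g \<in> L" "g' \<in> L" "s f = r g" "s f = r g'"
    and "d g = d g'" "cmp f g = cmp f g'"
  shows "g = g'"
proof -
  let ?P = "\<lambda>(u, v). u \<in> L \<and> v \<in> L \<and> s u = r v \<and> cmp f g = cmp u v \<and> d u = d f \<and> d v = d g"
  have "\<forall>f\<in>L. \<forall>a\<in>NN k. \<forall>b\<in>NN k. d f = a + b \<longrightarrow>
      (\<exists>!(u, v). u \<in> L \<and> v \<in> L \<and> s u = r v \<and> f = cmp u v \<and> d u = a \<and> d v = b)"
    using kg unfolding kgraph_def by (elim conjE)
  moreover have "cmp f g \<in> L" "d (cmp f g) = d f + d g"
    using kgraph_cmp[OF kg] assms by auto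
  moreover have "d f \<in> NN k" "d g \<in> NN k"
    using kgraph_degree_in_NN[OF kg] assms by auto
  ultimately have unique: "\<exists>!uv. ?P uv"
    by blast
  have "(THE uv. ?P uv) = (f, g)"
    by (rule the1_equality[OF unique]) (use assms in simp)
  moreover have "(THE uv. ?P uv) = (f, g')"
    by (rule the1_equality[OF unique]) (use assms in simp)
  ultimately show ?thesis
    by simp
qed

lemma graph_morph_edge:
  assumes "graph_morph k L r s cmp d m x" "p \<in> NN k" "q \<in> NN k" "p \<le> q" "le_en q m"
  shows "x p q \<in> L" "d (x p q) = q - p" "r (x p q) = x p p" "s (x p q) = x q q"
  using assms unfolding graph_morph_def by blast+

lemma graph_morph_cmp:
  assumes "graph_morph k L r s cmp d m x" "p \<in> NN k" "q \<in> NN k" "t \<in> NN k"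
    and "p \<le> q" "q \<le> t" "le_en t m"
  shows "cmp (x p q) (x q t) = x p t"
  using assms unfolding graph_morph_def by blast

lemma graph_morph_shift:
  assumes x: "graph_morph k L r s cmp d dx x" and m: "m \<in> NN k" "le_en m dx"
  shows "graph_morph k L r s cmp d (deg_shift m dx) (shift m x)"
proof -
  have "deg_shift m dx \<in> NNinf k"
    using x by (simp add: graph_morph_def deg_shift_in_NNinf)
  moreover have "shift m x p q \<in> L \<and> d (shift m x p q) = q - p
      \<and> r (shift m x p q) = shift m x p p \<and> s (shift m x p q) = shift m x q q"
    if "p \<in> NN k" "q \<in> NN k" "p \<le> q" "le_en q (deg_shift m dx)" for p q
  proof -
    have "p + m \<in> NN k" "q + m \<in> NN k" "p + m \<le> q + m" "le_en (q + m) dx"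
      using that m by (auto simp: add_in_NN le_en_deg_shift_iff le_fun_def)
    moreover have "q + m - (p + m) = q - p"
      by (simp add: fun_eq_iff)
    ultimately show ?thesis
      using graph_morph_edge[OF x] by (simp add: shift_def)
  qed
  moreover have "cmp (shift m x p q) (shift m x q t) = shift m x p t"
    if "p \<in> NN k" "q \<in> NN k" "t \<in> NN k" "p \<le> q" "q \<le> t" "le_en t (deg_shift m dx)" for p q t
  proof -
    have "p + m \<in> NN k" "q + m \<in> NN k" "t + m \<in> NN k" "p + m \<le> q + m" "q + m \<le> t + m"
      "le_en (t + m) dx"
      using that m by (auto simp: add_in_NN le_en_deg_shift_iff le_fun_def)
    then show ?thesis
      using graph_morph_cmp[OF x] by (simp add: shift_def)
  qed
  ultimately show ?thesis
    unfolding graph_morph_def by blast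
qed

lemma boundary_path_shift:
  assumes x: "boundary_path k L r s cmp d dx x" and m: "m \<in> NN k" "le_en m dx"
  shows "boundary_path k L r s cmp d (deg_shift m dx) (shift m x)"
proof -
  obtain nx where nx: "nx \<in> NN k" "le_en nx dx"
    and no_edge: "\<And>p i. p \<in> NN k \<Longrightarrow> nx \<le> p \<Longrightarrow> le_en p dx \<Longrightarrow> i < k \<Longrightarrow> enat (p i) = dx i
      \<Longrightarrow> \<not> (\<exists>e\<in>L. r e = x p p \<and> d e = unitv i)"
    using x unfolding boundary_path_def by blast
  have "le_en (nx - m + m) dx"
    unfolding le_en_def
  proof
    fix i
    show "enat ((nx - m + m) i) \<le> dx i"
      using nx(2) m(2) unfolding le_en_def by (cases "nx i \<le> m i") auto
  qed
  then have "le_en (nx - m) (deg_shift m dx)"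
    using m by (simp add: le_en_deg_shift_iff)
  moreover have "\<not> (\<exists>e\<in>L. r e = shift m x p p \<and> d e = unitv i)"
    if "p \<in> NN k" "nx - m \<le> p" "le_en p (deg_shift m dx)" "i < k" "enat (p i) = deg_shift m dx i"
    for p i
  proof -
    have "nx \<le> p + m"
      using that(2) by (simp add: le_fun_def le_diff_conv)
    then show ?thesis
      using no_edge[of "p + m" i] that m
      by (simp add: add_in_NN le_en_deg_shift_iff enat_eq_deg_shift_iff shift_def)
  qed
  moreover have "graph_morph k L r s cmp d (deg_shift m dx) (shift m x)"
    using x m by (simp add: boundary_path_def graph_morph_shift)
  ultimately show ?thesis
    unfolding boundary_path_def using nx(1) diff_in_NN by blast
qed

lemma concat_initial_segment:
  assumes kg: "kgraph k L r s cmp d" and lam: "lam \<in> L"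
    and z: "is_concat k L r s cmp d lam my y z" and c: "c \<in> NN k" "le_en c my"
  shows "z 0 (c + d lam) = cmp lam (y 0 c)"
proof -
  have "c + d lam \<in> NN k" "d lam \<le> c + d lam" "le_en (c + d lam) (deg_concat (d lam) my)"
    using c kgraph_degree_in_NN[OF kg lam] by (auto simp: add_in_NN le_en_deg_concat_iff le_fun_def)
  then show ?thesis
    using z unfolding is_concat_def by simp
qed

lemma shift_concat:
  assumes kg: "kgraph k L r s cmp d" and lam: "lam \<in> L"
    and y: "graph_morph k L r s cmp d my y" and src: "s lam = y 0 0"
    and z: "is_concat k L r s cmp d lam my y z"
    and ab: "a \<in> NN k" "b \<in> NN k" "a \<le> b" "le_en b my"
  shows "shift (d lam) z a b = y a b"
proof -
  let ?l = "d lam"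
  have gz: "graph_morph k L r s cmp d (deg_concat ?l my) z"
    using z by (simp add: is_concat_def)
  have l: "?l \<in> NN k"
    using kgraph_degree_in_NN[OF kg lam] .
  have a: "le_en a my"
    using le_en_mono[OF ab(3,4)] .
  have al: "a + ?l \<in> NN k" "b + ?l \<in> NN k" "0 \<le> a + ?l" "a + ?l \<le> b + ?l"
    "le_en (b + ?l) (deg_concat ?l my)"
    using ab l by (auto simp: add_in_NN le_en_deg_concat_iff le_fun_def)
  have y0a: "y 0 a \<in> L" "r (y 0 a) = s lam" "s (y 0 a) = y a a"
    and yab: "y a b \<in> L" "r (y a b) = y a a" "d (y a b) = b - a"
    using graph_morph_edge[OF y] ab a src zero_in_NN by (auto simp: le_fun_def)
  have zab: "z (a + ?l) (b + ?l) \<in> L" "r (z (a + ?l) (b + ?l)) = z (a + ?l) (a + ?l)"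
    "d (z (a + ?l) (b + ?l)) = b - a"
    using graph_morph_edge[OF gz al(1,2,4,5)] by (auto simp: fun_eq_iff)
  define f where "f = z 0 (a + ?l)"
  have f: "f = cmp lam (y 0 a)"
    using concat_initial_segment[OF kg lam z ab(1) a] f_def by simp
  have "f \<in> L" "s f = y a a"
    using f kgraph_cmp[OF kg lam y0a(1)] y0a by simp_all
  moreover have "s f = z (a + ?l) (a + ?l)"
    using graph_morph_edge[OF gz zero_in_NN al(1)] le_en_mono[OF al(4,5)] f_def by (simp add: le_fun_def)
  moreover have "cmp f (z (a + ?l) (b + ?l)) = cmp f (y a b)"
  proof -
    have "cmp f (z (a + ?l) (b + ?l)) = z 0 (b + ?l)"
      using graph_morph_cmp[OF gz zero_in_NN al] f_def by simp
    also have "\<dots> = cmp lam (y 0 b)"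
      using concat_initial_segment[OF kg lam z ab(2,4)] .
    also have "\<dots> = cmp lam (cmp (y 0 a) (y a b))"
      using graph_morph_cmp[OF y zero_in_NN ab(1,2) _ ab(3,4)] by (simp add: le_fun_def)
    also have "\<dots> = cmp f (y a b)"
      using kgraph_cmp_assoc[OF kg lam y0a(1) yab(1)] y0a yab f by simp
    finally show ?thesis .
  qed
  ultimately show ?thesis
    using kgraph_cancel_left[OF kg _ zab(1) yab(1)] zab yab by (simp add: shift_def)
qed

lemma boundary_path_concat:
  assumes kg: "kgraph k L r s cmp d" and lam: "lam \<in> L"
    and y: "boundary_path k L r s cmp d my y" and src: "s lam = y 0 0"
    and z: "is_concat k L r s cmp d lam my y z"
  shows "boundary_path k L r s cmp d (deg_concat (d lam) my) z"
proof -
  let ?l = "d lam"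
  obtain ny where ny: "ny \<in> NN k" "le_en ny my"
    and no_edge: "\<And>p i. p \<in> NN k \<Longrightarrow> ny \<le> p \<Longrightarrow> le_en p my \<Longrightarrow> i < k \<Longrightarrow> enat (p i) = my i
      \<Longrightarrow> \<not> (\<exists>e\<in>L. r e = y p p \<and> d e = unitv i)"
    using y unfolding boundary_path_def by blast
  have gy: "graph_morph k L r s cmp d my y"
    using y by (simp add: boundary_path_def)
  have "\<not> (\<exists>e\<in>L. r e = z p p \<and> d e = unitv i)"
    if "p \<in> NN k" "ny + ?l \<le> p" "le_en p (deg_concat ?l my)" "i < k" "enat (p i) = deg_concat ?l my i"
    for p i
  proof -
    define q where "q = p - ?l"
    have "?l \<le> p"
    proof (rule le_funI)
      fix j
      show "?l j \<le> p j"
        using le_funD[OF that(2), of j] by simp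
    qed
    then have p: "p = q + ?l"
      by (simp add: q_def le_fun_def fun_eq_iff)
    have "q \<in> NN k"
      using that(1) by (simp add: q_def diff_in_NN)
    moreover have "ny \<le> q" "le_en q my" "enat (q i) = my i"
      using that(2,3,5) unfolding p by (simp_all add: le_en_deg_concat_iff enat_eq_deg_concat_iff le_fun_def)
    moreover have "z p p = y q q"
      using shift_concat[OF kg lam gy src z, of q q] calculation p by (simp add: shift_def)
    ultimately show ?thesis
      using no_edge that(4) by simp
  qed
  moreover have "ny + ?l \<in> NN k" "le_en (ny + ?l) (deg_concat ?l my)"
    using ny kgraph_degree_in_NN[OF kg lam] by (simp_all add: add_in_NN le_en_deg_concat_iff)
  moreover have "graph_morph k L r s cmp d (deg_concat ?l my) z"
    using z by (simp add: is_concat_def)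
  ultimately show ?thesis
    unfolding boundary_path_def by blast
qed

lemma concat_shift_segment:
  assumes kg: "kgraph k L r s cmp d" and lam: "lam \<in> L"
    and x: "graph_morph k L r s cmp d dx x" and m: "m \<in> NN k" "le_en m dx"
    and src: "s lam = x m m" and z: "is_concat k L r s cmp d lam (deg_shift m dx) (shift m x) z"
    and p: "p \<in> NN k" "m \<le> p" "le_en p dx"
  shows "z (d lam) (p - m + d lam) = x m p"
proof -
  have cancel: "p - m + m = p"
    using p(2) by (simp add: le_fun_def fun_eq_iff)
  then have "p - m \<in> NN k" "0 \<le> p - m" "le_en (p - m) (deg_shift m dx)"
    using p(1,3) m(2) by (simp_all add: diff_in_NN le_en_deg_shift_iff le_fun_def)
  moreover have "s lam = shift m x 0 0"
    using src by (simp add: shift_def)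
  ultimately have "shift (d lam) z 0 (p - m) = shift m x 0 (p - m)"
    using shift_concat[OF kg lam graph_morph_shift[OF x m] _ z zero_in_NN] by blast
  then show ?thesis
    using cancel by (simp add: shift_def)
qed

lemma in_P_concat_shift:
  assumes kg: "kgraph k L r s cmp d" and lam: "lam \<in> L"
    and x: "in_P k L r s cmp d dx x m n" and m: "le_en m dx"
    and z: "boundary_path k L r s cmp d (deg_concat (d lam) (deg_shift m dx)) z"
  shows "in_P k L r s cmp d (deg_concat (d lam) (deg_shift m dx)) z (d lam) (n - m + d lam)"
proof -
  have mn: "n \<in> NN k" "m \<le> n" "\<not> le_en n dx"
    using x by (simp_all add: in_P_def)
  then have "n - m + m = n"
    by (simp add: le_fun_def fun_eq_iff)
  then have "\<not> le_en (n - m + d lam) (deg_concat (d lam) (deg_shift m dx))"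
    using mn(3) m by (simp add: le_en_deg_concat_iff le_en_deg_shift_iff)
  moreover have "d lam \<le> n - m + d lam"
    by (simp add: le_fun_def)
  ultimately show ?thesis
    using z mn(1) kgraph_degree_in_NN[OF kg lam] by (simp add: in_P_def add_in_NN diff_in_NN)
qed

theorem proposition3p16:
  fixes k :: nat and L :: "'a set" and r s :: "'a \<Rightarrow> 'a" and cmp :: "'a \<Rightarrow> 'a \<Rightarrow> 'a"
    and d :: "'a \<Rightarrow> nat \<Rightarrow> nat" and lam :: 'a
    and dx :: "nat \<Rightarrow> enat" and x z :: "(nat \<Rightarrow> nat) \<Rightarrow> (nat \<Rightarrow> nat) \<Rightarrow> 'a"
    and m n :: "nat \<Rightarrow> nat"
  assumes "kgraph k L r s cmp d"
    and "lam \<in> L"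
    and "in_P k L r s cmp d dx x m n"
    and "le_en m dx"
    and "s lam = x m m"
    and "is_concat k L r s cmp d lam (deg_shift m dx) (shift m x) z"
  shows "boundary_path k L r s cmp d (deg_concat (d lam) (deg_shift m dx)) z
       \<and> P_equiv k L r s cmp d (deg_concat (d lam) (deg_shift m dx)) z (d lam) (n - m + d lam)
                                dx x m n"
proof -
  let ?dy = "deg_shift m dx" and ?dz = "deg_concat (d lam) (deg_shift m dx)"
  have x: "boundary_path k L r s cmp d dx x" and mn: "m \<in> NN k" "n \<in> NN k" "m \<le> n"
    using assms(3) by (simp_all add: in_P_def)
  have y: "boundary_path k L r s cmp d ?dy (shift m x)"
    using boundary_path_shift[OF x mn(1) assms(4)] .
  have src: "s lam = shift m x 0 0"
    using assms(5) by (simp add: shift_def)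
  have z: "boundary_path k L r s cmp d ?dz z"
    using boundary_path_concat[OF assms(1,2) y src assms(6)] .
  have z_in_P: "in_P k L r s cmp d ?dz z (d lam) (n - m + d lam)"
    using in_P_concat_shift[OF assms(1,2,3,4) z] .
  define n' where "n' = meet_en n dx"
  have "n' \<in> NN k" "m \<le> n'" "le_en n' dx"
    using meet_en_in_NN[OF mn(2)] meet_en_greatest[OF mn(3) assms(4)] le_en_meet_en
    by (simp_all add: n'_def)
  then have "z (d lam) (n' - m + d lam) = x m n'"
    using concat_shift_segment[OF assms(1,2) _ mn(1) assms(4,5,6)] x by (simp add: boundary_path_def)
  moreover have "meet_en (n - m + d lam) ?dz = n' - m + d lam"
    using mn(3) assms(4) by (simp add: n'_def meet_en_deg_concat meet_en_deg_shift)
  moreover have "meet_en (d lam) ?dz = d lam"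
    using le_en_deg_concat_iff[of 0 "d lam"] le_en_zero by (simp add: meet_en_eq_self)
  moreover have "m - m = d lam - d lam" "n - m + d lam - d lam = n - m"
    by (simp_all add: fun_eq_iff)
  ultimately have "P_equiv k L r s cmp d ?dz z (d lam) (n - m + d lam) dx x m n"
    using z_in_P assms(3) meet_en_eq_self[OF assms(4)] by (simp add: P_equiv_def n'_def[symmetric])
  with z show ?thesis ..
qed

end
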